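(* Let $G=(V,E)$ be a finite, connected, bipartite cubic graph. For every $A\in\mathcal F(G)$, every $x\in V$, and every neighbour $x'$ of $x$, there exists a path $z_1z_2\cdots z_{2k}$ in $G$ (with distinct vertices, $k\ge1$) such that $z_1=x$, $z_{2k}=x'$, $z_iz_{i+1}\notin A$ for all odd $i$, and $z_iz_{i+1}\in A$ for all even $i$.
   Context: $\mathcal F(G)=\{A\subseteq E: d_w(A)=2\text{ for all }w\in V\}$, where $d_w(A)$ is the number of edges of $A$ incident to $w$ (the 2-factors of $G$). *)

theory Defs
  imports Main
begin

definition simple_graph :: "'a set \<Rightarrow> 'a set set \<Rightarrow> bool" where
  "simple_graph V E \<longleftrightarrow> finite V \<and> (\<forall>e\<in>E. e \<subseteq> V \<and> card e = 2)"

definition degree :: "'a set set \<Rightarrow> 'a \<Rightarrow> nat" where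
  "degree A w = card {e\<in>A. w \<in> e}"

definition cubic :: "'a set \<Rightarrow> 'a set set \<Rightarrow> bool" where
  "cubic V E \<longleftrightarrow> (\<forall>w\<in>V. degree E w = 3)"

definition adj :: "'a set set \<Rightarrow> 'a \<Rightarrow> 'a \<Rightarrow> bool" where
  "adj E u v \<longleftrightarrow> {u, v} \<in> E"

definition connected_graph :: "'a set \<Rightarrow> 'a set set \<Rightarrow> bool" where
  "connected_graph V E \<longleftrightarrow> (\<forall>u\<in>V. \<forall>v\<in>V. (adj E)\<^sup>*\<^sup>* u v)"

definition bipartite :: "'a set \<Rightarrow> 'a set set \<Rightarrow> bool" where
  "bipartite V E \<longleftrightarrow> (\<exists>X. X \<subseteq> V \<and> (\<forall>e\<in>E. card (e \<inter> X) = 1))"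

definition two_factors :: "'a set \<Rightarrow> 'a set set \<Rightarrow> 'a set set set" where
  "two_factors V E = {A. A \<subseteq> E \<and> (\<forall>w\<in>V. degree A w = 2)}"

definition is_path :: "'a set \<Rightarrow> 'a set set \<Rightarrow> 'a list \<Rightarrow> bool" where
  "is_path V E zs \<longleftrightarrow> zs \<noteq> [] \<and> distinct zs \<and> set zs \<subseteq> V \<and>
     (\<forall>i. Suc i < length zs \<longrightarrow> {zs ! i, zs ! Suc i} \<in> E)"

end

theory Submission
  imports Defs "HOL-Library.Transitive_Closure_Table"
begin

(*
  If A is a 2-factor of a cubic graph G, then M = E - A is a perfect matching; write mate v
  for the M-partner of v.  Starting from x, call u alternately reachable if it is reached by
  repeatedly taking the M-edge and then an A-edge (u \<mapsto> w whenever {mate u, w} \<in> A).  Let R be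
  this set.  A double-counting argument (|mate ` R| = |R|, A is regular, and all A-neighbours of
  mate ` R lie in R) shows that conversely all A-neighbours of R lie in mate ` R; hence R \<union> mate ` R
  is closed under adjacency and, G being connected, is all of V.  By bipartiteness R stays on the
  side of x, so a neighbour x' of x is mate u for some u \<in> R.  A repetition-free alternating walk
  x = u1, ..., uk = u, interleaved with the mates u1, mate u1, u2, ..., uk, mate uk = x', is the
  required path: its odd-numbered edges are M-edges and its even-numbered ones A-edges.
*)

lemma degree_eq_card_neighbours:
  assumes "\<forall>e\<in>F. card e = 2"
  shows "degree F v = card {w. {v, w} \<in> F}"
proof -
  have "bij_betw (\<lambda>w. {v, w}) {w. {v, w} \<in> F} {e\<in>F. v \<in> e}"
  proof (rule bij_betwI')
    fix e assume e: "e \<in> {e\<in>F. v \<in> e}"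
    then obtain a b where "e = {a, b}"
      using assms card_2_iff by (metis (no_types, lifting) mem_Collect_eq)
    with e have "e = {v, if a = v then b else a}" by auto
    with e show "\<exists>w\<in>{w. {v, w} \<in> F}. e = {v, w}" by auto
  qed (auto simp: doubleton_eq_iff)
  then show ?thesis
    unfolding degree_def by (simp add: bij_betw_same_card)
qed

(* If v has exactly one more E-neighbour than A-neighbours (A \<subseteq> E), it has exactly one
   neighbour via an edge of E - A.  For a 2-factor of a cubic graph, E - A is a perfect matching. *)
lemma unique_neighbour_outside:
  assumes "finite {w. {v, w} \<in> E}" and "A \<subseteq> E"
    and "card {w. {v, w} \<in> E} = Suc (card {w. {v, w} \<in> A})"
  shows "\<exists>!w. {v, w} \<in> E - A"
proof -
  have "{w. {v, w} \<in> E - A} = {w. {v, w} \<in> E} - {w. {v, w} \<in> A}" by auto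
  moreover have "{w. {v, w} \<in> A} \<subseteq> {w. {v, w} \<in> E}" using assms(2) by auto
  ultimately have "card {w. {v, w} \<in> E - A} = 1"
    using assms by (simp add: card_Diff_subset finite_subset)
  then obtain w where "{w. {v, w} \<in> E - A} = {w}" by (rule card_1_singletonE)
  then show ?thesis by (metis mem_Collect_eq singletonD singletonI)
qed

lemma bipartition_side:
  assumes "\<forall>e\<in>E. card e = 2" and "bipartite V E"
  obtains S where "x \<in> S" and "\<forall>a b. {a, b} \<in> E \<longrightarrow> (a \<in> S \<longleftrightarrow> b \<notin> S)"
proof -
  obtain X where X: "\<forall>e\<in>E. card (e \<inter> X) = 1"
    using assms(2) by (auto simp: bipartite_def)
  have split: "a \<in> X \<longleftrightarrow> b \<notin> X" if "{a, b} \<in> E" for a b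
  proof -
    have "a \<noteq> b" using assms(1) that by fastforce
    moreover have "card ({a, b} \<inter> X) = 1" using X that by blast
    ultimately show ?thesis by (cases "a \<in> X"; cases "b \<in> X") auto
  qed
  show thesis
    by (rule that[of "{v. v \<in> X \<longleftrightarrow> x \<in> X}"]) (use split in blast)+
qed

lemma rtrancl_path_successively:
  "rtrancl_path r x xs y \<Longrightarrow> successively r (x # xs) \<and> last (x # xs) = y"
  by (induction rule: rtrancl_path.induct) (auto simp: successively_Cons)

lemma rtrancl_path_reachable:
  "rtrancl_path r x xs y \<Longrightarrow> z \<in> set xs \<Longrightarrow> r\<^sup>*\<^sup>* x z"
  by (induction rule: rtrancl_path.induct)
     (auto intro: converse_rtranclp_into_rtranclp)

locale matched_bipartite =
  fixes V :: "'a set" and E A :: "'a set set" and S :: "'a set" and d :: nat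
  assumes finite_V: "finite V"
    and edges_in_V: "\<And>e. e \<in> E \<Longrightarrow> e \<subseteq> V"
    and factor_in_E: "A \<subseteq> E"
    and regular: "\<And>v. v \<in> V \<Longrightarrow> card {w. {v, w} \<in> A} = d"
    and matching: "\<And>v. v \<in> V \<Longrightarrow> \<exists>!w. {v, w} \<in> E - A"
    and bipartition: "\<And>a b. {a, b} \<in> E \<Longrightarrow> a \<in> S \<longleftrightarrow> b \<notin> S"
begin

lemma edge_ends_in_V: "{a, b} \<in> E \<Longrightarrow> a \<in> V \<and> b \<in> V"
  using edges_in_V by blast

lemma finite_neighbours: "finite {w. {v, w} \<in> A}"
  by (rule finite_subset[OF _ finite_V]) (use edge_ends_in_V factor_in_E in auto)

definition mate :: "'a \<Rightarrow> 'a" where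
  "mate v = (THE w. {v, w} \<in> E - A)"

lemma mate_edge: "v \<in> V \<Longrightarrow> {v, mate v} \<in> E - A"
  unfolding mate_def using matching theI' by metis

lemma mate_unique: "{v, w} \<in> E - A \<Longrightarrow> w = mate v"
  using matching mate_edge edge_ends_in_V by (metis DiffD1)

lemma mate_in_V: "v \<in> V \<Longrightarrow> mate v \<in> V"
  using mate_edge edge_ends_in_V by blast

lemma mate_mate: "v \<in> V \<Longrightarrow> mate (mate v) = v"
  using mate_edge mate_unique by (metis insert_commute)

lemma inj_on_mate: "inj_on mate V"
  by (metis inj_onI mate_mate)

lemma mate_side: "v \<in> V \<Longrightarrow> v \<in> S \<longleftrightarrow> mate v \<notin> S"
  using bipartition mate_edge by blast

definition alt_step :: "'a \<Rightarrow> 'a \<Rightarrow> bool" where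
  "alt_step u w \<longleftrightarrow> {mate u, w} \<in> A"

abbreviation alt_reach :: "'a \<Rightarrow> 'a set" where
  "alt_reach x \<equiv> {u. alt_step\<^sup>*\<^sup>* x u}"

lemma alt_reach_in_V:
  assumes "x \<in> V" and "alt_step\<^sup>*\<^sup>* x u"
  shows "u \<in> V"
  using assms(2,1) by (induction rule: rtranclp_induct)
    (use edge_ends_in_V factor_in_E in \<open>auto simp: alt_step_def\<close>)

(* Every alternating step crosses the bipartition twice, so it preserves the side. *)
lemma alt_reach_side:
  assumes "x \<in> V" and "alt_step\<^sup>*\<^sup>* x u"
  shows "u \<in> S \<longleftrightarrow> x \<in> S"
  using assms(2)
proof (induction rule: rtranclp_induct)
  case (step u w)
  have "u \<in> V" using alt_reach_in_V[OF assms(1) step(1)] .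
  then show ?case
    using step bipartition factor_in_E mate_side unfolding alt_step_def by blast
qed simp

(* The A-edges leaving mate ` R all end in R; there are d * |R| of them, which is the total
   number of A-edges at R, so they are all the A-edges at R. *)
lemma alt_reach_closed:
  assumes "x \<in> V" and "u \<in> alt_reach x" and "{u, v} \<in> A"
  shows "v \<in> mate ` alt_reach x"
proof -
  let ?R = "alt_reach x"
  let ?P = "SIGMA u:?R. {v. {u, v} \<in> A}"
  let ?Q = "(\<lambda>(v, u). (u, v)) ` (SIGMA v:mate ` ?R. {u. {v, u} \<in> A})"
  have R_V: "?R \<subseteq> V" using alt_reach_in_V assms(1) by blast
  then have finite_R: "finite ?R" using finite_V finite_subset by blast
  have "card ?P = d * card ?R"
    using finite_R R_V regular by (simp add: card_SigmaI finite_neighbours subset_iff)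
  moreover have "card ?Q = d * card (mate ` ?R)"
  proof -
    have "(\<Sum>v\<in>mate ` ?R. card {u. {v, u} \<in> A}) = (\<Sum>v\<in>mate ` ?R. d)"
      using R_V regular mate_in_V by (intro sum.cong) auto
    then show ?thesis
      using finite_R by (subst card_image) (auto simp: inj_on_def card_SigmaI finite_neighbours)
  qed
  moreover have "card (mate ` ?R) = card ?R"
    using card_image inj_on_mate R_V inj_on_subset by blast
  moreover have "?Q \<subseteq> ?P"
    by (auto simp: alt_step_def insert_commute intro: rtranclp.rtrancl_into_rtrancl)
  ultimately have "?Q = ?P"
    using finite_R by (intro card_subset_eq) (auto simp: finite_neighbours)
  moreover have "(u, v) \<in> ?P" using assms(2,3) by simp
  ultimately show ?thesis by force
qed

lemma alt_reach_covers:
  assumes "x \<in> V" and "(adj E)\<^sup>*\<^sup>* x v"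
  shows "v \<in> alt_reach x \<union> mate ` alt_reach x"
  using assms(2)
proof (induction rule: rtranclp_induct)
  case base
  then show ?case by simp
next
  case (step u w)
  have uw: "{u, w} \<in> E" using step(2) by (simp add: adj_def)
  from step(3) show ?case
  proof
    assume u: "u \<in> alt_reach x"
    show ?thesis
    proof (cases "{u, w} \<in> A")
      case True
      then show ?thesis using alt_reach_closed[OF assms(1) u] by blast
    next
      case False
      then show ?thesis using u uw mate_unique by blast
    qed
  next
    assume "u \<in> mate ` alt_reach x"
    then obtain u0 where u0: "u0 \<in> alt_reach x" "u = mate u0" by blast
    show ?thesis
    proof (cases "{u, w} \<in> A")
      case True
      then have "alt_step u0 w" using u0 by (simp add: alt_step_def)
      then show ?thesis using u0 by (auto intro: rtranclp.rtrancl_into_rtrancl)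
    next
      case False
      then have "w = u0"
        using u0 uw mate_unique mate_mate alt_reach_in_V[OF assms(1)] by fastforce
      then show ?thesis using u0 by blast
    qed
  qed
qed

fun interleave :: "'a list \<Rightarrow> 'a list" where
  "interleave [] = []"
| "interleave (u # us) = u # mate u # interleave us"

lemma length_interleave [simp]: "length (interleave us) = 2 * length us"
  by (induction us) auto

lemma set_interleave: "set (interleave us) = set us \<union> mate ` set us"
  by (induction us) auto

lemma nth_interleave:
  assumes "j < length us"
  shows "interleave us ! (2 * j) = us ! j" and "interleave us ! Suc (2 * j) = mate (us ! j)"
  using assms by (induction us arbitrary: j) (auto simp: nth_Cons split: nat.split)

lemma distinct_interleave:
  assumes "distinct us" and "set us \<subseteq> V \<inter> S"
  shows "distinct (interleave us)"
  using assms
proof (induction us)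
  case (Cons u us)
  have u: "u \<in> V" "u \<in> S" and us: "set us \<subseteq> V \<inter> S" using Cons.prems by auto
  then have "mate u \<notin> S" using mate_side by blast
  then have "mate u \<notin> set us" "mate u \<noteq> u" using u us by auto
  moreover have "u \<notin> mate ` set us" using u us mate_side by blast
  moreover have "mate u \<notin> mate ` set us"
    using Cons.prems inj_on_mate by (auto simp: inj_on_def)
  ultimately show ?case using Cons by (simp add: set_interleave)
qed simp

lemma interleave_alternates:
  assumes "successively alt_step us" and "set us \<subseteq> V"
    and "1 \<le> i" and "i < 2 * length us"
  shows "odd i \<Longrightarrow> {interleave us ! (i - 1), interleave us ! i} \<in> E - A"
    and "even i \<Longrightarrow> {interleave us ! (i - 1), interleave us ! i} \<in> A"
proof -
  assume "odd i"
  then obtain j where i: "i = Suc (2 * j)" by (rule oddE) simp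
  then have "j < length us" using assms(4) by simp
  then show "{interleave us ! (i - 1), interleave us ! i} \<in> E - A"
    using i nth_interleave mate_edge assms(2) by (simp add: subset_iff)
next
  assume "even i"
  then obtain t where "i = 2 * t" ..
  with assms(3) obtain j where i: "i = Suc (Suc (2 * j))" by (cases t) auto
  then have "Suc j < length us" using assms(4) by simp
  moreover have "interleave us ! Suc (Suc (2 * j)) = us ! Suc j"
    using nth_interleave(1)[OF \<open>Suc j < length us\<close>] by simp
  ultimately show "{interleave us ! (i - 1), interleave us ! i} \<in> A"
    using i nth_interleave successively_nth[OF assms(1)] by (simp add: alt_step_def)
qed

(* A neighbour x' of x lies on the other side, so it is not in R and must be mate u
   with u \<in> R; an alternating walk to u can be shortened to one without repetitions. *)
lemma alternating_walk_to_neighbour: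
  assumes "x \<in> V" and "x \<in> S" and "{x, x'} \<in> E" and "(adj E)\<^sup>*\<^sup>* x x'"
  obtains us where "us \<noteq> []" "hd us = x" "mate (last us) = x'" "distinct us"
    "successively alt_step us" "set us \<subseteq> alt_reach x"
proof -
  have "x' \<notin> alt_reach x"
    using assms bipartition alt_reach_side by blast
  then obtain u where u: "alt_step\<^sup>*\<^sup>* x u" "x' = mate u"
    using alt_reach_covers[OF assms(1,4)] by blast
  then obtain xs where "rtrancl_path alt_step x xs u"
    using rtranclp_eq_rtrancl_path by metis
  then obtain xs' where path: "rtrancl_path alt_step x xs' u" "distinct (x # xs')"
    by (rule rtrancl_path_distinct)
  show ?thesis
  proof (rule that[of "x # xs'"])
    show "successively alt_step (x # xs')" "mate (last (x # xs')) = x'"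
      using rtrancl_path_successively[OF path(1)] u(2) by simp_all
    show "set (x # xs') \<subseteq> alt_reach x"
      using rtrancl_path_reachable[OF path(1)] by auto
  qed (use path in simp_all)
qed

theorem alternating_path_to_neighbour:
  assumes "x \<in> V" and "x \<in> S" and "{x, x'} \<in> E" and "(adj E)\<^sup>*\<^sup>* x x'"
  shows "\<exists>zs k. k \<ge> 1 \<and> length zs = 2 * k \<and> is_path V E zs \<and>
           zs ! 0 = x \<and> zs ! (2 * k - 1) = x' \<and>
           (\<forall>i. 1 \<le> i \<and> i < 2 * k \<longrightarrow>
              (odd i \<longrightarrow> {zs ! (i - 1), zs ! i} \<notin> A) \<and>
              (even i \<longrightarrow> {zs ! (i - 1), zs ! i} \<in> A))"
proof -
  obtain us where us: "us \<noteq> []" "hd us = x" "mate (last us) = x'" "distinct us"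
    "successively alt_step us" "set us \<subseteq> alt_reach x"
    using alternating_walk_to_neighbour[OF assms] .
  have us_V: "set us \<subseteq> V" and us_S: "set us \<subseteq> S"
    using us(6) alt_reach_in_V alt_reach_side assms(1,2) by blast+
  define zs where "zs = interleave us"
  define k where "k = length us"
  have k: "k \<ge> 1" "length zs = 2 * k" using us(1) by (simp_all add: zs_def k_def Suc_le_eq)
  have alternates: "\<And>i. 1 \<le> i \<Longrightarrow> i < 2 * k \<Longrightarrow>
      (odd i \<longrightarrow> {zs ! (i - 1), zs ! i} \<in> E - A) \<and> (even i \<longrightarrow> {zs ! (i - 1), zs ! i} \<in> A)"
    using interleave_alternates[OF us(5) us_V] by (simp add: zs_def k_def)
  have "{zs ! i, zs ! Suc i} \<in> E" if "Suc i < length zs" for i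
    using alternates[of "Suc i"] that k factor_in_E by (cases "odd (Suc i)") auto
  moreover have "set zs \<subseteq> V" "distinct zs"
    using us_V us_S us(4) mate_in_V by (auto simp: zs_def set_interleave intro: distinct_interleave)
  ultimately have "is_path V E zs" using k by (auto simp: is_path_def)
  moreover have "zs ! 0 = x" "zs ! (2 * k - 1) = x'"
  proof -
    have "2 * k - 1 = Suc (2 * (k - 1))" using k(1) by simp
    then show "zs ! 0 = x" "zs ! (2 * k - 1) = x'"
      using nth_interleave[of 0 us] nth_interleave[of "k - 1" us] us(1-3) k(1)
      by (simp_all add: zs_def k_def hd_conv_nth last_conv_nth)
  qed
  ultimately show ?thesis using k alternates by blast
qed

end

lemma cubic_two_factor_matched_bipartite:
  assumes "simple_graph V E" and "cubic V E" and "A \<in> two_factors V E"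
    and "\<forall>a b. {a, b} \<in> E \<longrightarrow> (a \<in> S \<longleftrightarrow> b \<notin> S)"
  shows "matched_bipartite V E A S 2"
proof
  have pairs: "\<forall>e\<in>E. card e = 2" and "finite V" and E_V: "\<And>e. e \<in> E \<Longrightarrow> e \<subseteq> V"
    using assms(1) by (auto simp: simple_graph_def)
  then show "finite V" "\<And>e. e \<in> E \<Longrightarrow> e \<subseteq> V" by blast+
  show A_E: "A \<subseteq> E" using assms(3) by (simp add: two_factors_def)
  then have pairs_A: "\<forall>e\<in>A. card e = 2" using pairs by blast
  show deg_A: "card {w. {v, w} \<in> A} = 2" if "v \<in> V" for v
    using assms(3) that degree_eq_card_neighbours[OF pairs_A] by (simp add: two_factors_def)
  show "\<exists>!w. {v, w} \<in> E - A" if v: "v \<in> V" for v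
  proof (rule unique_neighbour_outside[OF _ A_E])
    show "finite {w. {v, w} \<in> E}"
      by (rule finite_subset[OF _ \<open>finite V\<close>]) (use E_V in auto)
    show "card {w. {v, w} \<in> E} = Suc (card {w. {v, w} \<in> A})"
      using assms(2) v deg_A[OF v] degree_eq_card_neighbours[OF pairs] by (simp add: cubic_def)
  qed
  show "\<And>a b. {a, b} \<in> E \<Longrightarrow> a \<in> S \<longleftrightarrow> b \<notin> S" using assms(4) by blast
qed

theorem lemma3:
  fixes V :: "'a set" and E :: "'a set set"
  assumes "simple_graph V E" and "connected_graph V E" and "bipartite V E" and "cubic V E"
    and "A \<in> two_factors V E" and "x \<in> V" and "{x, x'} \<in> E"
  shows "\<exists>zs k. k \<ge> 1 \<and> length zs = 2 * k \<and> is_path V E zs \<and>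
           zs ! 0 = x \<and> zs ! (2 * k - 1) = x' \<and>
           (\<forall>i. 1 \<le> i \<and> i < 2 * k \<longrightarrow>
              (odd i \<longrightarrow> {zs ! (i - 1), zs ! i} \<notin> A) \<and>
              (even i \<longrightarrow> {zs ! (i - 1), zs ! i} \<in> A))"
proof -
  have pairs: "\<forall>e\<in>E. card e = 2" using assms(1) by (simp add: simple_graph_def)
  obtain S where S: "x \<in> S" "\<forall>a b. {a, b} \<in> E \<longrightarrow> (a \<in> S \<longleftrightarrow> b \<notin> S)"
    by (rule bipartition_side[OF pairs assms(3)])
  interpret matched_bipartite V E A S 2
    using cubic_two_factor_matched_bipartite[OF assms(1,4,5) S(2)] .
  have "x' \<in> V" using assms(7) edge_ends_in_V by blast
  then have "(adj E)\<^sup>*\<^sup>* x x'"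
    using assms(2,6) by (simp add: connected_graph_def)
  then show ?thesis
    by (rule alternating_path_to_neighbour[OF assms(6) S(1) assms(7)])
qed
end
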